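(* Let $\Lambda\Subset\mathbb X$ and $x\in\mathbb X$. Then \[ \sum_{N\subset\Lambda}|\gamma(x,N)|\,\alpha^N=(1+\alpha(x)\mathbf 1_\Lambda(x))\sum_{N\subset\Lambda\setminus\{x\}}|\gamma(x,N)|\,\alpha^N, \] and \[ \sum_{N\subset\Lambda\setminus\{x\}}|\gamma(x,N)|\,\alpha^N\le\prod_{\substack{X\in\mathbf F(x):\\ X\setminus\{x\}\subset\Lambda}}\max\Big\{|W(X)|,\ 1+|W(X)-1|\alpha^S\ \Big|\ \varnothing\neq S\subset X\setminus\{x\}\Big\}. \]
   Context: $\mathbb X$ is a finite or countably infinite set, $X\Subset\mathbb X$ means finite subset, $\mathbf F$ is the set of finite subsets, $\mathbf F(x)=\{X\Subset\mathbb X\mid x\in X\}$. Fix $W:\mathbf F\to\mathbb C$, $r:\mathbb X\to[0,1)$, $\alpha=\frac r{1-r}$, $\alpha^S=\prod_{s\in S}\alpha(s)$. Conditional interaction: $W(X\mid B)=\prod_{C\subset B}W(X\cup C)$ if $X\cap B=\varnothing$, $0$ if $X=\{y\}$ with $y\in B$, $1$ otherwise; $\kappa(X\mid B)=\prod_{\varnothing\neq S\subset X}W(S\mid B)$ and $\kappa(x\mid B)=\kappa(\{x\}\mid B)$. Kernel: $\gamma(x,N)=\gamma(x,N\mid\varnothing)$ where $\gamma(x,N\mid B)=\sum_{M\subset N}(-1)^{|N\setminus M|}\kappa(x\mid B\cup M)$. A maximum $\max\{a,\ b_S\mid S\in\mathcal S\}$ denotes the maximum of $a$ and all $b_S$ (equal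 to $a$ if $\mathcal S=\varnothing$). *)

theory Defs
  imports "HOL-Analysis.Analysis"
begin

text \<open>The ground set \<open>\<bbbX>\<close> is a countable type \<open>'a::countable\<close>;
  W is given on all sets but only its values on finite sets matter.\<close>

definition alpha :: "('a \<Rightarrow> real) \<Rightarrow> 'a \<Rightarrow> real" where
  "alpha r s = r s / (1 - r s)"

definition alpha_pow :: "('a \<Rightarrow> real) \<Rightarrow> 'a set \<Rightarrow> real" where
  "alpha_pow r S = (\<Prod>s\<in>S. alpha r s)"

definition condW :: "('a set \<Rightarrow> complex) \<Rightarrow> 'a set \<Rightarrow> 'a set \<Rightarrow> complex" where
  "condW W X B =
     (if X \<inter> B = {} then (\<Prod>C\<in>Pow B. W (X \<union> C))
      else if (\<exists>y. X = {y} \<and> y \<in> B) then 0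
      else 1)"

definition kappa :: "('a set \<Rightarrow> complex) \<Rightarrow> 'a set \<Rightarrow> 'a set \<Rightarrow> complex" where
  "kappa W X B = (\<Prod>S\<in>Pow X - {{}}. condW W S B)"

definition gammaB :: "('a set \<Rightarrow> complex) \<Rightarrow> 'a \<Rightarrow> 'a set \<Rightarrow> 'a set \<Rightarrow> complex" where
  "gammaB W x N B = (\<Sum>M\<in>Pow N. (-1) ^ card (N - M) * kappa W {x} (B \<union> M))"

definition gamma :: "('a set \<Rightarrow> complex) \<Rightarrow> 'a \<Rightarrow> 'a set \<Rightarrow> complex" where
  "gamma W x N = gammaB W x N {}"

end

theory Submission
  imports Defs
begin

text \<open>
  The kernel \<open>\<gamma>(x,\<cdot>)\<close> is the subset Moebius transform of \<open>M \<mapsto> \<kappa>(x|M)\<close>. Since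
  \<open>\<kappa>(x|M) = 0\<close> whenever \<open>x \<in> M\<close>, adjoining \<open>x\<close> to \<open>N\<close> only flips the sign of \<open>\<gamma>(x,N)\<close>,
  which gives the identity. For \<open>x \<notin> M \<subseteq> L = \<Lambda> - {x}\<close>, \<open>\<kappa>(x|M)\<close> is the product over
  all \<open>C \<subseteq> L\<close> of the factors \<open>W(x \<union> C)\<close> if \<open>C \<subseteq> M\<close> and \<open>1\<close> otherwise. Multiplying a
  function by one such factor with \<open>C = D\<close> and \<open>W(x \<union> D) = c\<close> changes its Moebius transform
  only at the tops \<open>N \<supseteq> D\<close> of the fibres \<open>{A \<union> B | B \<subseteq> D}\<close>, by \<open>c - 1\<close> times the sum of
  the transform over the fibre. So the \<open>\<alpha>\<close>-weighted \<open>l\<^sup>1\<close> norm of the transform grows at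
  most by the factor \<open>max {|c|, 1 + |c - 1| \<alpha>(S) | \<emptyset> \<noteq> S \<subseteq> D}\<close>, and induction over
  the factors gives the bound.
\<close>

definition mobius :: "('a set \<Rightarrow> 'b::comm_ring_1) \<Rightarrow> 'a set \<Rightarrow> 'b" where
  "mobius \<Phi> N = (\<Sum>M\<in>Pow N. (-1) ^ card (N - M) * \<Phi> M)"

lemma mobius_cong: "(\<And>M. M \<subseteq> N \<Longrightarrow> \<Phi> M = \<Psi> M) \<Longrightarrow> mobius \<Phi> N = mobius \<Psi> N"
  unfolding mobius_def by (intro sum.cong) auto

lemma inj_on_insert_Pow: "y \<notin> N \<Longrightarrow> inj_on (insert y) (Pow N)"
  unfolding inj_on_def by (metis Pow_iff insert_ident subsetD)

lemma sum_Pow_insert: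
  fixes F :: "'a set \<Rightarrow> 'b::comm_monoid_add"
  assumes "finite N" "y \<notin> N"
  shows "(\<Sum>M\<in>Pow (insert y N). F M) = (\<Sum>M\<in>Pow N. F M) + (\<Sum>M\<in>Pow N. F (insert y M))"
proof -
  have "(\<Sum>M\<in>Pow (insert y N). F M) = (\<Sum>M\<in>Pow N. F M) + (\<Sum>M\<in>insert y ` Pow N. F M)"
    unfolding Pow_insert by (rule sum.union_disjoint) (use assms in auto)
  then show ?thesis
    by (simp add: sum.reindex[OF inj_on_insert_Pow[OF assms(2)]])
qed

lemma sum_Pow_split:
  fixes F :: "'a set \<Rightarrow> 'b::comm_monoid_add"
  assumes "finite M" "D \<subseteq> M"
  shows "(\<Sum>K\<in>Pow M. F K) = (\<Sum>A\<in>Pow (M - D). \<Sum>B\<in>Pow D. F (A \<union> B))"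
proof -
  have "bij_betw (\<lambda>(A, B). A \<union> B) (Pow (M - D) \<times> Pow D) (Pow M)"
    by (rule bij_betwI[where g = "\<lambda>K. (K - D, K \<inter> D)"]) (use assms in auto)
  then show ?thesis
    by (simp add: sum.cartesian_product case_prod_unfold flip: sum.reindex_bij_betw)
qed

lemma sum_Pow_supsets:
  fixes F :: "'a set \<Rightarrow> 'b::comm_monoid_add"
  assumes "finite M" "D \<subseteq> M"
  shows "(\<Sum>K\<in>Pow M. if D \<subseteq> K then F (K - D) else 0) = (\<Sum>A\<in>Pow (M - D). F A)"
proof -
  have "(\<Sum>K\<in>Pow M. if D \<subseteq> K then F (K - D) else 0) = (\<Sum>K\<in>{K\<in>Pow M. D \<subseteq> K}. F (K - D))"
    using assms(1) by (subst sum.inter_filter) auto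
  also have "\<dots> = (\<Sum>A\<in>Pow (M - D). F A)"
    by (rule sum.reindex_bij_witness[where i = "\<lambda>A. A \<union> D" and j = "\<lambda>K. K - D"]) (use assms in auto)
  finally show ?thesis .
qed

lemma mobius_insert:
  assumes "finite N" "y \<notin> N"
  shows "mobius \<Phi> (insert y N) = mobius (\<lambda>M. \<Phi> (insert y M)) N - mobius \<Phi> N"
proof -
  have "(\<Sum>M\<in>Pow N. (-1) ^ card (insert y N - M) * \<Phi> M) = - mobius \<Phi> N"
    unfolding mobius_def sum_negf[symmetric]
    by (intro sum.cong) (use assms in \<open>auto simp: insert_Diff_if finite_subset\<close>)
  moreover have "(\<Sum>M\<in>Pow N. (-1) ^ card (insert y N - insert y M) * \<Phi> (insert y M))
      = mobius (\<lambda>M. \<Phi> (insert y M)) N"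
    unfolding mobius_def by (intro sum.cong) (use assms in auto)
  ultimately show ?thesis
    unfolding mobius_def[of _ "insert y N"] sum_Pow_insert[OF assms] by simp
qed

lemma mobius_sum_Pow:
  assumes "finite N"
  shows "mobius (\<lambda>M. \<Sum>K\<in>Pow M. h K) N = h N"
proof -
  have "h N = (\<Sum>M\<in>Pow N. (-1) ^ (card N - card M) * (\<Sum>K\<in>Pow M. h K))"
    by (rule inclusion_exclusion_mobius[OF _ assms]) simp
  then show ?thesis
    unfolding mobius_def using assms
    by (auto intro!: sum.cong simp: card_Diff_subset finite_subset)
qed

lemma sum_Pow_mobius:
  assumes "finite N"
  shows "(\<Sum>M\<in>Pow N. mobius \<Phi> M) = \<Phi> N"
proof -
  define g where "g T = (\<Sum>U\<in>Pow T. (-1) ^ card U * \<Phi> U)" for T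
  have "mobius \<Phi> T = (-1) ^ card T * g T" if "finite T" for T
    unfolding mobius_def g_def sum_distrib_left
  proof (intro sum.cong refl)
    fix U assume "U \<in> Pow T"
    then have "(-1) ^ card (T - U) = ((-1) ^ (card T + card U) :: 'b)"
      using that by (simp add: card_Diff_subset finite_subset card_mono
          neg_one_power_add_eq_neg_one_power_diff)
    then show "(-1) ^ card (T - U) * \<Phi> U = (-1) ^ card T * ((-1) ^ card U * \<Phi> U)"
      by (simp add: power_add)
  qed
  moreover have "\<Phi> N = (\<Sum>T\<in>Pow N. (-1) ^ card T * g T)"
    by (rule inclusion_exclusion_symmetric[OF _ assms]) (simp add: g_def)
  ultimately show ?thesis
    using assms by (auto intro!: sum.cong simp: finite_subset)
qed

text \<open>The right-hand side \<open>h\<close> satisfies \<open>\<Sum>K\<subseteq>M. h K = \<Phi> M * (if D \<subseteq> M then c else 1)\<close>,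
  so the claim is Moebius inversion.\<close>

lemma mobius_mult_if_subset:
  assumes "finite N" "finite D"
  shows "mobius (\<lambda>M. \<Phi> M * (if D \<subseteq> M then c else 1)) N
     = mobius \<Phi> N + (c - 1) * (if D \<subseteq> N then \<Sum>B\<in>Pow D. mobius \<Phi> ((N - D) \<union> B) else 0)"
    (is "_ = ?h N")
proof -
  have "(\<Sum>K\<in>Pow M. ?h K) = \<Phi> M * (if D \<subseteq> M then c else 1)" if "finite M" for M
  proof (cases "D \<subseteq> M")
    case True
    have "(\<Sum>K\<in>Pow M. if D \<subseteq> K then \<Sum>B\<in>Pow D. mobius \<Phi> ((K - D) \<union> B) else 0)
        = (\<Sum>A\<in>Pow (M - D). \<Sum>B\<in>Pow D. mobius \<Phi> (A \<union> B))"
      by (rule sum_Pow_supsets[OF that True])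
    also have "\<dots> = \<Phi> M"
      by (simp add: that True sum_Pow_mobius flip: sum_Pow_split)
    finally have "(\<Sum>K\<in>Pow M. ?h K) = \<Phi> M + (c - 1) * \<Phi> M"
      using that by (simp add: sum.distrib sum_Pow_mobius flip: sum_distrib_left)
    then show ?thesis
      using True by (simp add: algebra_simps)
  next
    case False
    then have "\<not> D \<subseteq> K" if "K \<in> Pow M" for K
      using that by blast
    then show ?thesis
      using False \<open>finite M\<close> by (simp add: sum.distrib sum_Pow_mobius)
  qed
  then have "mobius (\<lambda>M. \<Phi> M * (if D \<subseteq> M then c else 1)) N = mobius (\<lambda>M. \<Sum>K\<in>Pow M. ?h K) N"
    using assms(1) by (intro mobius_cong) (simp add: finite_subset)
  also have "\<dots> = ?h N"
    by (rule mobius_sum_Pow[OF assms(1)])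
  finally show ?thesis .
qed

lemma alpha_pow_nonneg: "(\<And>s. 0 \<le> alpha r s) \<Longrightarrow> 0 \<le> alpha_pow r S"
  unfolding alpha_pow_def by (rule prod_nonneg) auto

lemma alpha_pow_union:
  "finite A \<Longrightarrow> finite B \<Longrightarrow> A \<inter> B = {} \<Longrightarrow> alpha_pow r (A \<union> B) = alpha_pow r A * alpha_pow r B"
  unfolding alpha_pow_def by (rule prod.union_disjoint)

text \<open>Here \<open>g B\<close> is the value at \<open>A \<union> B\<close> on the fibre over \<open>A\<close>. Only the top \<open>B = D\<close> is
  perturbed; its extra terms are absorbed by the lower elements, using \<open>alpha_pow r (A \<union> D) = alpha_pow r (A \<union> B) * alpha_pow r (D - B)\<close>.\<close>

lemma fiber_perturbation_norm_le:
  fixes g :: "'a set \<Rightarrow> 'b::real_normed_field"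
  assumes fin: "finite A" "finite D" and disj: "A \<inter> D = {}"
    and apos: "\<And>s. 0 \<le> alpha r s"
    and c_le: "norm c \<le> m"
    and c_S_le: "\<And>S. S \<noteq> {} \<Longrightarrow> S \<subseteq> D \<Longrightarrow> 1 + norm (c - 1) * alpha_pow r S \<le> m"
  shows "(\<Sum>B\<in>Pow D. norm (g B + (if B = D then (c - 1) * (\<Sum>B'\<in>Pow D. g B') else 0))
            * alpha_pow r (A \<union> B))
       \<le> m * (\<Sum>B\<in>Pow D. norm (g B) * alpha_pow r (A \<union> B))"
proof -
  let ?H = "\<lambda>B. norm (g B) * alpha_pow r (A \<union> B)"
  let ?P = "Pow D - {D}"
  have split: "(\<Sum>B\<in>Pow D. F B) = F D + (\<Sum>B\<in>?P. F B)" for F :: "'a set \<Rightarrow> 'c::comm_monoid_add"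
    using fin(2) by (simp add: sum.remove)
  have w: "alpha_pow r (A \<union> D) = alpha_pow r (A \<union> B) * alpha_pow r (D - B)" if "B \<subseteq> D" for B
  proof -
    have "A \<union> D = (A \<union> B) \<union> (D - B)"
      using that by auto
    moreover have "(A \<union> B) \<inter> (D - B) = {}"
      using disj by auto
    ultimately show ?thesis
      using fin that by (simp add: alpha_pow_union finite_subset)
  qed
  have w_nonneg: "0 \<le> alpha_pow r S" for S
    using apos by (rule alpha_pow_nonneg)
  have "norm (g D + (c - 1) * (\<Sum>B\<in>Pow D. g B)) = norm (c * g D + (c - 1) * (\<Sum>B\<in>?P. g B))"
    by (simp add: split algebra_simps)
  also have "\<dots> \<le> norm c * norm (g D) + norm (c - 1) * (\<Sum>B\<in>?P. norm (g B))"
    by (rule order_trans[OF norm_triangle_ineq])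
      (simp add: norm_mult mult_left_mono norm_sum)
  finally have "norm (g D + (c - 1) * (\<Sum>B\<in>Pow D. g B)) * alpha_pow r (A \<union> D)
      \<le> (norm c * norm (g D) + norm (c - 1) * (\<Sum>B\<in>?P. norm (g B))) * alpha_pow r (A \<union> D)"
    using w_nonneg by (rule mult_right_mono)
  also have "\<dots> = norm c * ?H D + (\<Sum>B\<in>?P. norm (c - 1) * norm (g B) * alpha_pow r (A \<union> D))"
    by (simp add: algebra_simps sum_distrib_left sum_distrib_right)
  also have "(\<Sum>B\<in>?P. norm (c - 1) * norm (g B) * alpha_pow r (A \<union> D))
      = (\<Sum>B\<in>?P. norm (c - 1) * alpha_pow r (D - B) * ?H B)"
    by (rule sum.cong) (auto simp: w mult_ac)
  finally have top: "norm (g D + (c - 1) * (\<Sum>B\<in>Pow D. g B)) * alpha_pow r (A \<union> D)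
      \<le> norm c * ?H D + (\<Sum>B\<in>?P. norm (c - 1) * alpha_pow r (D - B) * ?H B)" .
  have rest: "(\<Sum>B\<in>?P. (1 + norm (c - 1) * alpha_pow r (D - B)) * ?H B) \<le> (\<Sum>B\<in>?P. m * ?H B)"
  proof (intro sum_mono mult_right_mono)
    fix B assume "B \<in> ?P"
    then show "1 + norm (c - 1) * alpha_pow r (D - B) \<le> m"
      by (intro c_S_le) auto
  qed (simp add: w_nonneg)
  have "norm c * ?H D \<le> m * ?H D"
    using c_le w_nonneg by (intro mult_right_mono) auto
  with top rest show ?thesis
    by (simp add: split sum.distrib algebra_simps flip: sum_distrib_left)
qed

definition mobius_norm :: "('a \<Rightarrow> real) \<Rightarrow> ('a set \<Rightarrow> 'b::real_normed_field) \<Rightarrow> 'a set \<Rightarrow> real" where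
  "mobius_norm r \<Phi> L = (\<Sum>N\<in>Pow L. norm (mobius \<Phi> N) * alpha_pow r N)"

lemma mobius_norm_mult_if_subset_le:
  fixes \<Phi> :: "'a set \<Rightarrow> 'b::real_normed_field"
  assumes fin: "finite L" and "D \<subseteq> L"
    and apos: "\<And>s. 0 \<le> alpha r s"
    and c_le: "norm c \<le> m"
    and c_S_le: "\<And>S. S \<noteq> {} \<Longrightarrow> S \<subseteq> D \<Longrightarrow> 1 + norm (c - 1) * alpha_pow r S \<le> m"
  shows "mobius_norm r (\<lambda>M. \<Phi> M * (if D \<subseteq> M then c else 1)) L \<le> m * mobius_norm r \<Phi> L"
proof -
  have fin_D: "finite D"
    using fin \<open>D \<subseteq> L\<close> by (rule finite_subset[rotated])
  let ?\<Psi> = "\<lambda>M. \<Phi> M * (if D \<subseteq> M then c else 1)"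
  have fiber: "(\<Sum>B\<in>Pow D. norm (mobius ?\<Psi> (A \<union> B)) * alpha_pow r (A \<union> B))
      \<le> m * (\<Sum>B\<in>Pow D. norm (mobius \<Phi> (A \<union> B)) * alpha_pow r (A \<union> B))"
    if A: "A \<in> Pow (L - D)" for A
  proof -
    have fin_A: "finite A" and disj: "A \<inter> D = {}"
      using A fin by (auto simp: finite_subset)
    have "mobius ?\<Psi> (A \<union> B) = mobius \<Phi> (A \<union> B)
        + (if B = D then (c - 1) * (\<Sum>B'\<in>Pow D. mobius \<Phi> (A \<union> B')) else 0)"
      if "B \<in> Pow D" for B
    proof -
      have "D \<subseteq> A \<union> B \<longleftrightarrow> B = D" and "B = D \<Longrightarrow> A \<union> B - D = A"
        using that disj by auto
      then show ?thesis
        using fin_A fin_D that by (simp add: mobius_mult_if_subset finite_subset)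
    qed
    then have "(\<Sum>B\<in>Pow D. norm (mobius ?\<Psi> (A \<union> B)) * alpha_pow r (A \<union> B))
      = (\<Sum>B\<in>Pow D. norm (mobius \<Phi> (A \<union> B)
          + (if B = D then (c - 1) * (\<Sum>B'\<in>Pow D. mobius \<Phi> (A \<union> B')) else 0)) * alpha_pow r (A \<union> B))"
      by (intro sum.cong) auto
    also have "\<dots> \<le> m * (\<Sum>B\<in>Pow D. norm (mobius \<Phi> (A \<union> B)) * alpha_pow r (A \<union> B))"
      by (rule fiber_perturbation_norm_le[OF fin_A fin_D disj apos c_le c_S_le])
    finally show ?thesis .
  qed
  have "mobius_norm r ?\<Psi> L = (\<Sum>A\<in>Pow (L - D). \<Sum>B\<in>Pow D. norm (mobius ?\<Psi> (A \<union> B)) * alpha_pow r (A \<union> B))"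
    unfolding mobius_norm_def by (rule sum_Pow_split[OF fin \<open>D \<subseteq> L\<close>])
  also have "\<dots> \<le> (\<Sum>A\<in>Pow (L - D). m * (\<Sum>B\<in>Pow D. norm (mobius \<Phi> (A \<union> B)) * alpha_pow r (A \<union> B)))"
    by (rule sum_mono) (rule fiber)
  also have "\<dots> = m * mobius_norm r \<Phi> L"
    unfolding mobius_norm_def by (simp add: sum_distrib_left sum_Pow_split[OF fin \<open>D \<subseteq> L\<close>])
  finally show ?thesis .
qed

definition prod_contained :: "('a set \<Rightarrow> 'b::comm_monoid_mult) \<Rightarrow> 'a set set \<Rightarrow> 'a set \<Rightarrow> 'b" where
  "prod_contained f CC M = (\<Prod>C\<in>CC. if C \<subseteq> M then f C else 1)"

definition growth_bound :: "('a set \<Rightarrow> 'b::real_normed_field) \<Rightarrow> ('a \<Rightarrow> real) \<Rightarrow> 'a set \<Rightarrow> real" where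
  "growth_bound f r C =
     Max (insert (norm (f C)) {1 + norm (f C - 1) * alpha_pow r S | S. S \<noteq> {} \<and> S \<subseteq> C})"

lemma growth_bound_ge:
  assumes "finite C"
  shows "norm (f C) \<le> growth_bound f r C"
    and "S \<noteq> {} \<Longrightarrow> S \<subseteq> C \<Longrightarrow> 1 + norm (f C - 1) * alpha_pow r S \<le> growth_bound f r C"
proof -
  have "{1 + norm (f C - 1) * alpha_pow r S | S. S \<noteq> {} \<and> S \<subseteq> C}
      \<subseteq> (\<lambda>S. 1 + norm (f C - 1) * alpha_pow r S) ` Pow C"
    by auto
  then have fin: "finite (insert (norm (f C)) {1 + norm (f C - 1) * alpha_pow r S | S. S \<noteq> {} \<and> S \<subseteq> C})"
    using assms finite_subset by blast
  show "norm (f C) \<le> growth_bound f r C"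
    unfolding growth_bound_def by (rule Max_ge[OF fin]) simp
  show "S \<noteq> {} \<Longrightarrow> S \<subseteq> C \<Longrightarrow> 1 + norm (f C - 1) * alpha_pow r S \<le> growth_bound f r C"
    unfolding growth_bound_def by (rule Max_ge[OF fin]) blast
qed

lemma mobius_norm_const_1: "finite L \<Longrightarrow> mobius_norm r (\<lambda>_. 1 :: 'b::real_normed_field) L = 1"
proof -
  assume fin: "finite L"
  have "mobius (\<lambda>_. 1 :: 'b) N = (if N = {} then 1 else 0)" if "finite N" for N :: "'a set"
  proof -
    have "mobius (\<lambda>_. 1 :: 'b) N = mobius (\<lambda>M. \<Sum>K\<in>Pow M. if K = {} then 1 else 0) N"
      using that by (intro mobius_cong) (simp add: finite_subset)
    also have "\<dots> = (if N = {} then 1 else 0)"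
      by (rule mobius_sum_Pow[OF that])
    finally show ?thesis .
  qed
  then have "mobius_norm r (\<lambda>_. 1 :: 'b) L = (\<Sum>N\<in>Pow L. if N = {} then 1 else 0)"
    unfolding mobius_norm_def using fin by (intro sum.cong) (auto simp: finite_subset alpha_pow_def)
  then show ?thesis
    using fin by simp
qed

lemma mobius_norm_prod_contained_le:
  fixes f :: "'a set \<Rightarrow> 'b::real_normed_field"
  assumes fin: "finite L" and apos: "\<And>s. 0 \<le> alpha r s"
    and "finite CC" "CC \<subseteq> Pow L"
  shows "mobius_norm r (prod_contained f CC) L \<le> (\<Prod>C\<in>CC. growth_bound f r C)"
  using assms(3,4)
proof (induction CC rule: finite_induct)
  case empty
  have "prod_contained f {} = (\<lambda>_. 1)"
    by (simp add: prod_contained_def fun_eq_iff)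
  then show ?case
    by (simp add: mobius_norm_const_1 fin)
next
  case (insert D CC)
  then have "D \<subseteq> L" and fin_D: "finite D"
    using fin by (auto simp: finite_subset)
  have "prod_contained f (insert D CC) = (\<lambda>M. prod_contained f CC M * (if D \<subseteq> M then f D else 1))"
    using insert.hyps by (simp add: prod_contained_def fun_eq_iff mult.commute)
  then have "mobius_norm r (prod_contained f (insert D CC)) L
      \<le> growth_bound f r D * mobius_norm r (prod_contained f CC) L"
    using mobius_norm_mult_if_subset_le[OF fin \<open>D \<subseteq> L\<close> apos growth_bound_ge[OF fin_D]] by simp
  also have "\<dots> \<le> growth_bound f r D * (\<Prod>C\<in>CC. growth_bound f r C)"
    using insert.IH insert.prems growth_bound_ge(1)[OF fin_D, of f r]
    by (intro mult_left_mono) (auto intro: order_trans[OF norm_ge_zero])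
  finally show ?case
    using insert.hyps by simp
qed

lemma kappa_singleton: "kappa W {x} M = (if x \<in> M then 0 else \<Prod>C\<in>Pow M. W (insert x C))"
proof -
  have "Pow {x} - {{}} = {{x}}"
    by auto
  then show ?thesis
    unfolding kappa_def condW_def by auto
qed

lemma gamma_eq_mobius: "gamma W x N = mobius (kappa W {x}) N"
  unfolding gamma_def gammaB_def mobius_def by simp

lemma gamma_insert_self:
  assumes "finite N" "x \<notin> N"
  shows "gamma W x (insert x N) = - gamma W x N"
  unfolding gamma_eq_mobius mobius_insert[OF assms]
  by (simp add: mobius_def kappa_singleton)

lemma sum_gamma_Pow_insert_self:
  assumes "finite L" "x \<notin> L"
  shows "(\<Sum>N\<in>Pow (insert x L). cmod (gamma W x N) * alpha_pow r N)
    = (1 + alpha r x) * (\<Sum>N\<in>Pow L. cmod (gamma W x N) * alpha_pow r N)"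
proof -
  have "cmod (gamma W x (insert x N)) * alpha_pow r (insert x N) = alpha r x * (cmod (gamma W x N) * alpha_pow r N)"
    if "N \<in> Pow L" for N
  proof -
    have "finite N" "x \<notin> N"
      using that assms by (auto simp: finite_subset)
    then show ?thesis
      by (simp add: gamma_insert_self alpha_pow_def)
  qed
  then have "(\<Sum>N\<in>Pow L. cmod (gamma W x (insert x N)) * alpha_pow r (insert x N))
      = alpha r x * (\<Sum>N\<in>Pow L. cmod (gamma W x N) * alpha_pow r N)"
    unfolding sum_distrib_left by (rule sum.cong[OF refl])
  then show ?thesis
    by (simp add: sum_Pow_insert[OF assms] algebra_simps)
qed

lemma kappa_singleton_eq_prod_contained:
  assumes "finite L" "x \<notin> L" "M \<subseteq> L"
  shows "kappa W {x} M = prod_contained (\<lambda>C. W (insert x C)) (Pow L) M"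
proof -
  have "prod_contained (\<lambda>C. W (insert x C)) (Pow L) M = (\<Prod>C\<in>{C\<in>Pow L. C \<subseteq> M}. W (insert x C))"
    unfolding prod_contained_def using assms(1) by (subst prod.inter_filter) auto
  also have "{C\<in>Pow L. C \<subseteq> M} = Pow M"
    using assms(3) by auto
  finally show ?thesis
    using assms by (auto simp: kappa_singleton)
qed

lemma sum_gamma_le_prod_growth_bound:
  assumes "finite L" "x \<notin> L" "\<And>s. 0 \<le> alpha r s"
  shows "(\<Sum>N\<in>Pow L. cmod (gamma W x N) * alpha_pow r N)
    \<le> (\<Prod>C\<in>Pow L. growth_bound (\<lambda>C. W (insert x C)) r C)"
proof -
  have "(\<Sum>N\<in>Pow L. cmod (gamma W x N) * alpha_pow r N)
      = mobius_norm r (prod_contained (\<lambda>C. W (insert x C)) (Pow L)) L"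
    unfolding mobius_norm_def gamma_eq_mobius using assms(1,2)
    by (intro sum.cong mobius_cong refl arg_cong2[where f = "(*)"] arg_cong[where f = norm])
      (auto intro: kappa_singleton_eq_prod_contained)
  also have "\<dots> \<le> (\<Prod>C\<in>Pow L. growth_bound (\<lambda>C. W (insert x C)) r C)"
    using assms by (intro mobius_norm_prod_contained_le) auto
  finally show ?thesis .
qed

lemma prod_growth_bound_insert:
  fixes W :: "'a set \<Rightarrow> 'b::real_normed_field"
  assumes "finite L" "x \<notin> L"
  shows "(\<Prod>C\<in>Pow L. growth_bound (\<lambda>C. W (insert x C)) r C)
    = (\<Prod>X\<in>{X. finite X \<and> x \<in> X \<and> X - {x} \<subseteq> L}.
         Max (insert (norm (W X)) {1 + norm (W X - 1) * alpha_pow r S | S. S \<noteq> {} \<and> S \<subseteq> X - {x}}))"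
proof -
  have X_set: "{X. finite X \<and> x \<in> X \<and> X - {x} \<subseteq> L} = insert x ` Pow L"
  proof
    show "{X. finite X \<and> x \<in> X \<and> X - {x} \<subseteq> L} \<subseteq> insert x ` Pow L"
    proof
      fix X assume "X \<in> {X. finite X \<and> x \<in> X \<and> X - {x} \<subseteq> L}"
      then have "X = insert x (X - {x})" and "X - {x} \<in> Pow L"
        by auto
      then show "X \<in> insert x ` Pow L"
        by blast
    qed
  qed (use assms(1) in \<open>auto simp: finite_subset\<close>)
  show ?thesis
    unfolding X_set prod.reindex[OF inj_on_insert_Pow[OF assms(2)]] o_def
  proof (intro prod.cong refl)
    fix C assume "C \<in> Pow L"
    then have "insert x C - {x} = C"
      using assms(2) by auto
    then show "growth_bound (\<lambda>C. W (insert x C)) r C = Max (insert (norm (W (insert x C)))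
        {1 + norm (W (insert x C) - 1) * alpha_pow r S | S. S \<noteq> {} \<and> S \<subseteq> insert x C - {x}})"
      by (simp add: growth_bound_def)
  qed
qed

theorem corollary6p5:
  fixes W :: "('a::countable) set \<Rightarrow> complex"
    and r :: "'a \<Rightarrow> real"
    and \<Lambda> :: "'a set"
    and x :: 'a
  assumes r_range: "\<And>s. 0 \<le> r s \<and> r s < 1"
    and fin: "finite \<Lambda>"
  shows "((\<Sum>N\<in>Pow \<Lambda>. cmod (gamma W x N) * alpha_pow r N)
           = (1 + alpha r x * of_bool (x \<in> \<Lambda>))
             * (\<Sum>N\<in>Pow (\<Lambda> - {x}). cmod (gamma W x N) * alpha_pow r N))
       \<and> ((\<Sum>N\<in>Pow (\<Lambda> - {x}). cmod (gamma W x N) * alpha_pow r N)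
           \<le> (\<Prod>X\<in>{X. finite X \<and> x \<in> X \<and> X - {x} \<subseteq> \<Lambda>}.
                 Max (insert (cmod (W X))
                   {1 + cmod (W X - 1) * alpha_pow r S | S. S \<noteq> {} \<and> S \<subseteq> X - {x}})))"
proof
  define L where "L = \<Lambda> - {x}"
  have fin_L: "finite L" and x_L: "x \<notin> L"
    using fin by (auto simp: L_def)
  show "(\<Sum>N\<in>Pow \<Lambda>. cmod (gamma W x N) * alpha_pow r N)
      = (1 + alpha r x * of_bool (x \<in> \<Lambda>)) * (\<Sum>N\<in>Pow (\<Lambda> - {x}). cmod (gamma W x N) * alpha_pow r N)"
  proof (cases "x \<in> \<Lambda>")
    case True
    then have "\<Lambda> = insert x L"
      by (auto simp: L_def)
    then show ?thesis
      using True sum_gamma_Pow_insert_self[OF fin_L x_L] by (simp add: L_def)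
  qed simp
  have apos: "0 \<le> alpha r s" for s
    using r_range[of s] by (simp add: alpha_def)
  have "{X. finite X \<and> x \<in> X \<and> X - {x} \<subseteq> \<Lambda>} = {X. finite X \<and> x \<in> X \<and> X - {x} \<subseteq> L}"
    by (auto simp: L_def)
  then show "(\<Sum>N\<in>Pow (\<Lambda> - {x}). cmod (gamma W x N) * alpha_pow r N)
      \<le> (\<Prod>X\<in>{X. finite X \<and> x \<in> X \<and> X - {x} \<subseteq> \<Lambda>}.
            Max (insert (cmod (W X)) {1 + cmod (W X - 1) * alpha_pow r S | S. S \<noteq> {} \<and> S \<subseteq> X - {x}}))"
    using sum_gamma_le_prod_growth_bound[OF fin_L x_L apos, of W]
      prod_growth_bound_insert[OF fin_L x_L, of W r]
    by (simp add: L_def)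
qed

end
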